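(* Let $T$ be a tree with $m$ edges, with notation as in the context. Let $f:\mathbb{N}\times\mathbb{N}\to\mathbb{N}$ be a function with the following property: for all natural numbers $m',\lambda$, all $b'\ge 0$ and positive integers $m_1,\ldots,m_{b'+1}$ with $m'=m_1+\cdots+m_{b'+1}$, every $f(m',\lambda)$-edge-connected bipartite graph $H$ on classes $A',B'$ in which all vertices of $A'$ have degree divisible by $m'$ can be decomposed into $b'+1$ spanning $\lambda$-edge-connected graphs $H_1,\ldots,H_{b'+1}$ with $d(v,H_i)=\frac{m_i}{m'}d(v,H)$ for $v\in A'$, $i\in\{1,\ldots,b'+1\}$, and $d(v,H_i)$ divisible by $m_i$ for $v\in B'$, $i\in\{1,\ldots,b'\}$ (such a function exists). Let $d$ be a natural number and let $G$ be a bipartite graph on vertex classes $A$ and $B$ in which every vertex of $A$ has degree divisible by $m$. If $G$ is $f(m,md)$-edge-connected, then $G$ admits a $T$-equitable edge-colouring in which every vertex has at least $d$ incident edges of each colour $1,\ldots,m$.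
   Context: All graphs are finite and loopless but may have multiple edges. Let $T_A$, $T_B$ be the two vertex classes of a proper $2$-colouring of $T$, chosen so that $T_B$ contains a leaf of $T$. Denote the non-leaves of $T$ in $T_A$ by $t_1,\ldots,t_a$ and those in $T_B$ by $t_{a+1},\ldots,t_{a+b}$. Colour the edges of $T$ with colours $1,\ldots,m$, distinct edges getting distinct colours, and let $T(i)$ be the set of colours at $t_i$. For an edge-colouring of $G$, $d_j(v)$ is the number of edges of colour $j$ at $v$. An edge-colouring of $G$ with colours $1,\ldots,m$ is $T$-equitable if for every $v\in A$, $i\in\{1,\ldots,a\}$, $j,k\in T(i)$ we have $d_j(v)=d_k(v)$, and for every $v\in B$, $i\in\{a+1,\ldots,a+b\}$, $j,k\in T(i)$ we have $d_j(v)=d_k(v)$. *)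

theory Defs
  imports Main
begin

text \<open>A multigraph is a vertex set V, an edge set E and an endpoint map
  ends; each edge has exactly two distinct endpoints (loopless), parallel
  edges are allowed.\<close>

definition multigraph :: "'a set \<Rightarrow> 'e set \<Rightarrow> ('e \<Rightarrow> 'a set) \<Rightarrow> bool" where
  "multigraph V E ends \<longleftrightarrow> finite V \<and> finite E \<and>
     (\<forall>e\<in>E. ends e \<subseteq> V \<and> card (ends e) = 2)"

definition bipartite_on :: "'a set \<Rightarrow> 'e set \<Rightarrow> ('e \<Rightarrow> 'a set) \<Rightarrow> 'a set \<Rightarrow> 'a set \<Rightarrow> bool" where
  "bipartite_on V E ends A B \<longleftrightarrow> multigraph V E ends \<and> A \<union> B = V \<and> A \<inter> B = {} \<and>
     (\<forall>e\<in>E. \<exists>a\<in>A. \<exists>b\<in>B. ends e = {a, b})"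

definition deg :: "'e set \<Rightarrow> ('e \<Rightarrow> 'a set) \<Rightarrow> 'a \<Rightarrow> nat" where
  "deg E ends v = card {e\<in>E. v \<in> ends e}"

definition mg_connected :: "'a set \<Rightarrow> 'e set \<Rightarrow> ('e \<Rightarrow> 'a set) \<Rightarrow> bool" where
  "mg_connected V E ends \<longleftrightarrow>
     (\<forall>u\<in>V. \<forall>v\<in>V. (\<lambda>x y. \<exists>e\<in>E. ends e = {x, y})\<^sup>*\<^sup>* u v)"

text \<open>k-edge-connected (Diestel's convention): at least two vertices, and the
  graph stays connected after deleting any set of fewer than k edges.\<close>

definition edge_connected :: "nat \<Rightarrow> 'a set \<Rightarrow> 'e set \<Rightarrow> ('e \<Rightarrow> 'a set) \<Rightarrow> bool" where
  "edge_connected k V E ends \<longleftrightarrow> card V > 1 \<and>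
     (\<forall>F\<subseteq>E. card F < k \<longrightarrow> mg_connected V (E - F) ends)"

definition simple_graph :: "'v set \<Rightarrow> 'v set set \<Rightarrow> bool" where
  "simple_graph VT ET \<longleftrightarrow> finite VT \<and>
     ET \<subseteq> {{x, y} | x y. x \<in> VT \<and> y \<in> VT \<and> x \<noteq> y}"

definition sg_connected :: "'v set \<Rightarrow> 'v set set \<Rightarrow> bool" where
  "sg_connected VT ET \<longleftrightarrow> (\<forall>u\<in>VT. \<forall>v\<in>VT. (\<lambda>x y. {x, y} \<in> ET)\<^sup>*\<^sup>* u v)"

definition has_cycle :: "'v set \<Rightarrow> 'v set set \<Rightarrow> bool" where
  "has_cycle VT ET \<longleftrightarrow> (\<exists>xs. length xs \<ge> 3 \<and> distinct xs \<and> set xs \<subseteq> VT \<and>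
     (\<forall>i<length xs. {xs ! i, xs ! ((i + 1) mod length xs)} \<in> ET))"

definition is_tree :: "'v set \<Rightarrow> 'v set set \<Rightarrow> bool" where
  "is_tree VT ET \<longleftrightarrow> simple_graph VT ET \<and> VT \<noteq> {} \<and> sg_connected VT ET \<and> \<not> has_cycle VT ET"

definition tdeg :: "'v set set \<Rightarrow> 'v \<Rightarrow> nat" where
  "tdeg ET t = card {e\<in>ET. t \<in> e}"

definition is_leaf :: "'v set set \<Rightarrow> 'v \<Rightarrow> bool" where
  "is_leaf ET t \<longleftrightarrow> tdeg ET t = 1"

definition tcols :: "'v set set \<Rightarrow> ('v set \<Rightarrow> nat) \<Rightarrow> 'v \<Rightarrow> nat set" where
  "tcols ET c t = c ` {e\<in>ET. t \<in> e}"

definition dcol :: "'e set \<Rightarrow> ('e \<Rightarrow> 'a set) \<Rightarrow> ('e \<Rightarrow> nat) \<Rightarrow> nat \<Rightarrow> 'a \<Rightarrow> nat" where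
  "dcol E ends \<phi> j v = card {e\<in>E. v \<in> ends e \<and> \<phi> e = j}"

definition T_equitable ::
  "'v set set \<Rightarrow> 'v set \<Rightarrow> 'v set \<Rightarrow> ('v set \<Rightarrow> nat) \<Rightarrow>
   'e set \<Rightarrow> ('e \<Rightarrow> 'a set) \<Rightarrow> 'a set \<Rightarrow> 'a set \<Rightarrow> ('e \<Rightarrow> nat) \<Rightarrow> bool" where
  "T_equitable ET TA TB c E ends A B \<phi> \<longleftrightarrow>
     (\<forall>e\<in>E. \<phi> e \<in> {1..card ET}) \<and>
     (\<forall>v\<in>A. \<forall>t\<in>TA. \<not> is_leaf ET t \<longrightarrow>
        (\<forall>j\<in>tcols ET c t. \<forall>k\<in>tcols ET c t. dcol E ends \<phi> j v = dcol E ends \<phi> k v)) \<and>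
     (\<forall>v\<in>B. \<forall>t\<in>TB. \<not> is_leaf ET t \<longrightarrow>
        (\<forall>j\<in>tcols ET c t. \<forall>k\<in>tcols ET c t. dcol E ends \<phi> j v = dcol E ends \<phi> k v))"

text \<open>Graphs H are taken with vertex and edge type nat; since every finite
  multigraph is isomorphic to one of these, this ranges over all finite
  bipartite multigraphs up to isomorphism. k = b'+1, ms i = m_i, and the
  decomposition H_1..H_k is given by the edge labelling psi.\<close>

definition decomp_property :: "(nat \<Rightarrow> nat \<Rightarrow> nat) \<Rightarrow> bool" where
  "decomp_property f \<longleftrightarrow>
    (\<forall>m' lam k (ms :: nat \<Rightarrow> nat) (V :: nat set) (E :: nat set) (ends :: nat \<Rightarrow> nat set) A B.
       k \<ge> 1 \<and> (\<forall>i\<in>{1..k}. ms i > 0) \<and> m' = (\<Sum>i=1..k. ms i) \<and>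
       bipartite_on V E ends A B \<and> (\<forall>v\<in>A. m' dvd deg E ends v) \<and>
       edge_connected (f m' lam) V E ends
     \<longrightarrow> (\<exists>\<psi> :: nat \<Rightarrow> nat. (\<forall>e\<in>E. \<psi> e \<in> {1..k}) \<and>
            (\<forall>i\<in>{1..k}.
               edge_connected lam V {e\<in>E. \<psi> e = i} ends \<and>
               (\<forall>v\<in>A. m' * deg {e\<in>E. \<psi> e = i} ends v = ms i * deg E ends v) \<and>
               (i < k \<longrightarrow> (\<forall>v\<in>B. ms i dvd deg {e\<in>E. \<psi> e = i} ends v)))))"

end

theory Submission
  imports Defs
begin

text \<open>
  Enumerate the vertices of \<open>T\<^sub>B\<close> as \<open>t\<^sub>1, \<dots>, t\<^sub>k\<close> with a leaf last and put
  \<open>m\<^sub>i = deg\<^sub>T t\<^sub>i\<close>; every edge of the tree has exactly one end in \<open>T\<^sub>B\<close>, so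
  \<open>m = m\<^sub>1 + \<dots> + m\<^sub>k\<close>. The decomposition property of \<open>f\<close> splits \<open>G\<close> into spanning
  \<open>md\<close>-edge-connected graphs \<open>H\<^sub>i\<close> with \<open>d(v, H\<^sub>i) = (m\<^sub>i / m) d(v, G)\<close> on \<open>A\<close> and
  \<open>m\<^sub>i\<close> dividing \<open>d(v, H\<^sub>i)\<close> on \<open>B\<close> (trivially for \<open>i = k\<close>, as \<open>m\<^sub>k = 1\<close>). So every
  degree of \<open>H\<^sub>i\<close> is divisible by \<open>m\<^sub>i\<close>, and an equitable edge colouring of the
  bipartite multigraph \<open>H\<^sub>i\<close> with the \<open>m\<^sub>i\<close> colours at \<open>t\<^sub>i\<close> gives each of them exactly
  \<open>d(v, H\<^sub>i) / m\<^sub>i \<ge> d\<close> edges at every vertex \<open>v\<close>; on \<open>A\<close> this is \<open>d(v, G) / m\<close> for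
  every colour. Equitable colourings exist because a colouring minimising the sum of
  the squared colour degrees cannot have two colours differing by more than one at a vertex:
  rebalancing those two colour classes along an orientation of their union in which
  in- and out-degrees differ by at most one would decrease the sum.
\<close>

section \<open>Isomorphic copies of multigraphs\<close>

definition graph_iso ::
  "('a \<Rightarrow> 'b) \<Rightarrow> ('e \<Rightarrow> 'f) \<Rightarrow> 'a set \<Rightarrow> 'e set \<Rightarrow> ('e \<Rightarrow> 'a set) \<Rightarrow>
   'b set \<Rightarrow> 'f set \<Rightarrow> ('f \<Rightarrow> 'b set) \<Rightarrow> bool" where
  "graph_iso hv he V E ends V' E' ends' \<longleftrightarrow> bij_betw hv V V' \<and> bij_betw he E E' \<and>
     (\<forall>e\<in>E. ends e \<subseteq> V \<and> ends' (he e) = hv ` ends e)"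

lemma graph_iso_inv:
  assumes "graph_iso hv he V E ends V' E' ends'"
  shows "graph_iso (inv_into V hv) (inv_into E he) V' E' ends' V E ends"
  unfolding graph_iso_def
proof (intro conjI ballI)
  have hv: "bij_betw hv V V'" and he: "bij_betw he E E'"
    and ends: "\<forall>e\<in>E. ends e \<subseteq> V \<and> ends' (he e) = hv ` ends e"
    using assms unfolding graph_iso_def by auto
  show "bij_betw (inv_into V hv) V' V" "bij_betw (inv_into E he) E' E"
    using hv he by (simp_all add: bij_betw_inv_into)
  fix e' assume "e' \<in> E'"
  then obtain e where e: "e \<in> E" "e' = he e" using he by (auto simp: bij_betw_def)
  then have "inv_into E he e' = e" using he by (simp add: bij_betw_def)
  then show "ends' e' \<subseteq> V'" "ends (inv_into E he e') = inv_into V hv ` ends' e'"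
    using ends e hv by (auto simp: bij_betw_def)
qed

lemma graph_iso_edge_subset:
  assumes "graph_iso hv he V E ends V' E' ends'" and "F \<subseteq> E"
  shows "graph_iso hv he V F ends V' (he ` F) ends'"
  using assms unfolding graph_iso_def by (auto intro: bij_betw_subset)

lemma deg_graph_iso:
  assumes "graph_iso hv he V E ends V' E' ends'" and "v \<in> V"
  shows "deg E' ends' (hv v) = deg E ends v"
proof -
  have hv: "inj_on hv V" and he: "bij_betw he E E'"
    and ends: "\<forall>e\<in>E. ends e \<subseteq> V \<and> ends' (he e) = hv ` ends e"
    using assms(1) unfolding graph_iso_def bij_betw_def by auto
  have "{e'\<in>E'. hv v \<in> ends' e'} = he ` {e\<in>E. v \<in> ends e}"
    using he ends hv assms(2) by (auto simp: bij_betw_def inj_on_image_mem_iff)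
  moreover have "inj_on he {e\<in>E. v \<in> ends e}"
    using he by (auto simp: bij_betw_def intro: inj_on_subset)
  ultimately show ?thesis unfolding deg_def by (simp add: card_image)
qed

lemma mg_connected_graph_iso:
  assumes "graph_iso hv he V E ends V' E' ends'" and "mg_connected V E ends"
  shows "mg_connected V' E' ends'"
  unfolding mg_connected_def
proof (intro ballI)
  have hv: "bij_betw hv V V'" and he: "bij_betw he E E'"
    and ends: "\<forall>e\<in>E. ends e \<subseteq> V \<and> ends' (he e) = hv ` ends e"
    using assms(1) unfolding graph_iso_def by auto
  let ?R = "\<lambda>x y. \<exists>e\<in>E. ends e = {x, y}" and ?R' = "\<lambda>x y. \<exists>e\<in>E'. ends' e = {x, y}"
  have path: "?R'\<^sup>*\<^sup>* (hv x) (hv y)" if "?R\<^sup>*\<^sup>* x y" for x y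
    using that
  proof (induction rule: rtranclp_induct)
    case (step y z)
    then obtain e where "e \<in> E" "ends e = {y, z}" by blast
    then have "?R' (hv y) (hv z)" using he ends by (metis bij_betwE image_empty image_insert)
    with step.IH show ?case by (rule rtranclp.rtrancl_into_rtrancl)
  qed simp
  fix u' v' assume "u' \<in> V'" "v' \<in> V'"
  then obtain u v where "u \<in> V" "v \<in> V" "u' = hv u" "v' = hv v"
    using hv by (auto simp: bij_betw_def)
  with assms(2) path show "?R'\<^sup>*\<^sup>* u' v'" unfolding mg_connected_def by blast
qed

lemma edge_connected_graph_iso:
  assumes iso: "graph_iso hv he V E ends V' E' ends'" and ec: "edge_connected k V E ends"
  shows "edge_connected k V' E' ends'"
  unfolding edge_connected_def
proof (intro conjI allI impI)
  have hv: "bij_betw hv V V'" and he: "bij_betw he E E'"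
    using iso unfolding graph_iso_def by auto
  show "1 < card V'" using ec bij_betw_same_card[OF hv] unfolding edge_connected_def by simp
  fix F' assume F': "F' \<subseteq> E'" "card F' < k"
  define F where "F = {e\<in>E. he e \<in> F'}"
  have "he ` F = F'" using he F'(1) unfolding F_def bij_betw_def by auto
  moreover have "inj_on he F" using he unfolding F_def bij_betw_def by (auto intro: inj_on_subset)
  ultimately have "card F < k" using F'(2) card_image by fastforce
  then have "mg_connected V (E - F) ends" using ec unfolding edge_connected_def F_def by auto
  moreover have "he ` (E - F) = E' - F'" using he unfolding F_def bij_betw_def by auto
  ultimately show "mg_connected V' (E' - F') ends'"
    using mg_connected_graph_iso graph_iso_edge_subset[OF iso, of "E - F"] by fastforce
qed

lemma bipartite_on_graph_iso:
  assumes iso: "graph_iso hv he V E ends V' E' ends'" and bip: "bipartite_on V E ends A B"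
  shows "bipartite_on V' E' ends' (hv ` A) (hv ` B)"
proof -
  have hv: "bij_betw hv V V'" and he: "bij_betw he E E'"
    and ends: "\<forall>e\<in>E. ends e \<subseteq> V \<and> ends' (he e) = hv ` ends e"
    using iso unfolding graph_iso_def by auto
  have mg: "finite V" "finite E" "\<forall>e\<in>E. card (ends e) = 2" and AB: "A \<union> B = V" "A \<inter> B = {}"
    and eAB: "\<forall>e\<in>E. \<exists>a\<in>A. \<exists>b\<in>B. ends e = {a, b}"
    using bip unfolding bipartite_on_def multigraph_def by auto
  have inj: "inj_on hv V" using hv by (rule bij_betw_imp_inj_on)
  show ?thesis
    unfolding bipartite_on_def multigraph_def
  proof (intro conjI ballI)
    show "finite V'" "finite E'" using mg hv he bij_betw_finite by blast+
    show "hv ` A \<union> hv ` B = V'" using AB hv by (auto simp: bij_betw_def)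
    show "hv ` A \<inter> hv ` B = {}" using AB inj by (auto simp: inj_on_def)
  next
    fix e' assume "e' \<in> E'"
    then obtain e where e: "e \<in> E" "e' = he e" using he by (auto simp: bij_betw_def)
    show "ends' e' \<subseteq> V'" using e ends hv by (auto simp: bij_betw_def)
    show "card (ends' e') = 2" using e ends mg(3) inj by (simp add: card_image inj_on_subset)
    show "\<exists>a\<in>hv ` A. \<exists>b\<in>hv ` B. ends' e' = {a, b}" using e ends eAB by fastforce
  qed
qed

lemma ex_nat_graph_iso:
  fixes V :: "'a set" and E :: "'e set"
  assumes "finite V" "finite E" "\<forall>e\<in>E. ends e \<subseteq> V"
  obtains hv he and V' E' :: "nat set" and ends' :: "nat \<Rightarrow> nat set"
  where "graph_iso hv he V E ends V' E' ends'"
proof -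
  obtain hv where hv: "bij_betw hv V {0..<card V}" using assms(1) ex_bij_betw_finite_nat by blast
  obtain he where he: "bij_betw he E {0..<card E}" using assms(2) ex_bij_betw_finite_nat by blast
  have "graph_iso hv he V E ends {0..<card V} {0..<card E} (\<lambda>e'. hv ` ends (inv_into E he e'))"
    using hv he assms(3) unfolding graph_iso_def by (simp add: bij_betw_def)
  then show ?thesis by (rule that)
qed

text \<open>The decomposition property only speaks about graphs on \<open>nat\<close>; it transfers to
  graphs on arbitrary types through an isomorphic copy.\<close>

lemma decomp_propertyD:
  fixes V :: "'a set" and E :: "'e set" and k lam :: nat and ms :: "nat \<Rightarrow> nat"
  assumes f: "decomp_property f"
    and k: "1 \<le> k" and ms: "\<forall>i\<in>{1..k}. 0 < ms i" "m' = (\<Sum>i=1..k. ms i)"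
    and bip: "bipartite_on V E ends A B" and divA: "\<forall>v\<in>A. m' dvd deg E ends v"
    and conn: "edge_connected (f m' lam) V E ends"
  shows "\<exists>\<psi>. (\<forall>e\<in>E. \<psi> e \<in> {1..k}) \<and>
           (\<forall>i\<in>{1..k}.
              edge_connected lam V {e\<in>E. \<psi> e = i} ends \<and>
              (\<forall>v\<in>A. m' * deg {e\<in>E. \<psi> e = i} ends v = ms i * deg E ends v) \<and>
              (i < k \<longrightarrow> (\<forall>v\<in>B. ms i dvd deg {e\<in>E. \<psi> e = i} ends v)))"
proof -
  have mg: "finite V" "finite E" "\<forall>e\<in>E. ends e \<subseteq> V" and AB: "A \<subseteq> V" "B \<subseteq> V"
    using bip unfolding bipartite_on_def multigraph_def by auto
  obtain hv he and V' E' :: "nat set" and ends' where iso: "graph_iso hv he V E ends V' E' ends'"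
    by (rule ex_nat_graph_iso[OF mg])
  have he: "bij_betw he E E'" using iso unfolding graph_iso_def by simp
  have deg': "deg E' ends' (hv v) = deg E ends v" if "v \<in> V" for v
    using deg_graph_iso[OF iso that] .
  have "bipartite_on V' E' ends' (hv ` A) (hv ` B)" "edge_connected (f m' lam) V' E' ends'"
    using bipartite_on_graph_iso[OF iso bip] edge_connected_graph_iso[OF iso conn] .
  moreover have "\<forall>v\<in>hv ` A. m' dvd deg E' ends' v" using divA deg' AB by auto
  ultimately obtain \<psi> where \<psi>: "\<forall>e\<in>E'. \<psi> e \<in> {1..k}"
    and parts: "\<forall>i\<in>{1..k}. edge_connected lam V' {e\<in>E'. \<psi> e = i} ends' \<and>
       (\<forall>v\<in>hv ` A. m' * deg {e\<in>E'. \<psi> e = i} ends' v = ms i * deg E' ends' v) \<and>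
       (i < k \<longrightarrow> (\<forall>v\<in>hv ` B. ms i dvd deg {e\<in>E'. \<psi> e = i} ends' v))"
    using f[unfolded decomp_property_def, rule_format, of k ms m' V' E' ends' "hv ` A" "hv ` B" lam] k ms
    by blast
  define P where "P i = {e\<in>E. \<psi> (he e) = i}" for i
  have iso_P: "graph_iso hv he V (P i) ends V' {e\<in>E'. \<psi> e = i} ends'" for i
  proof -
    have "he ` P i = {e\<in>E'. \<psi> e = i}" using he unfolding P_def bij_betw_def by auto
    then show ?thesis using graph_iso_edge_subset[OF iso, of "P i"] unfolding P_def by simp
  qed
  have deg_P: "deg {e\<in>E'. \<psi> e = i} ends' (hv v) = deg (P i) ends v" if "v \<in> V" for i v
    using deg_graph_iso[OF iso_P that] .
  show ?thesis
  proof (intro exI[of _ "\<psi> \<circ> he"] conjI ballI impI)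
    show "(\<psi> \<circ> he) e \<in> {1..k}" if "e \<in> E" for e
      using \<psi> he that by (auto simp: bij_betw_def)
    fix i assume i: "i \<in> {1..k}"
    show "edge_connected lam V {e\<in>E. (\<psi> \<circ> he) e = i} ends"
      using edge_connected_graph_iso[OF graph_iso_inv[OF iso_P]] parts i by (simp add: P_def)
    show "m' * deg {e\<in>E. (\<psi> \<circ> he) e = i} ends v = ms i * deg E ends v" if "v \<in> A" for v
    proof -
      have "m' * deg {e\<in>E'. \<psi> e = i} ends' (hv v) = ms i * deg E' ends' (hv v)"
        using parts i that by blast
      with that AB show ?thesis using deg_P deg' by (auto simp: P_def)
    qed
    show "ms i dvd deg {e\<in>E. (\<psi> \<circ> he) e = i} ends v" if "i < k" "v \<in> B" for v
    proof -
      have "ms i dvd deg {e\<in>E'. \<psi> e = i} ends' (hv v)"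
        using parts i that by blast
      with that AB show ?thesis using deg_P by (auto simp: P_def)
    qed
  qed
qed

section \<open>Equitable edge colourings of bipartite multigraphs\<close>

definition net_out :: "'a \<Rightarrow> 'a \<times> 'a \<Rightarrow> int" where
  "net_out u xy = of_bool (fst xy = u) - of_bool (snd xy = u)"

lemma net_out_path: "net_out u (x, v) + net_out u (v, y) = net_out u (x, y)"
  by (simp add: net_out_def)

lemma exists_balanced_orientation:
  assumes "finite E"
  shows "\<exists>q. (\<forall>e\<in>E. q e = p e \<or> q e = prod.swap (p e)) \<and> (\<forall>u. \<bar>\<Sum>e\<in>E. net_out u (q e)\<bar> \<le> 1)"
  using assms
proof (induction "card E" arbitrary: E p rule: less_induct)
  case less
  show ?case
  proof (cases "\<exists>v a b e1 e2. e1 \<in> E \<and> e2 \<in> E \<and> e1 \<noteq> e2 \<and> p e1 \<in> {(v, a), (a, v)} \<and> p e2 \<in> {(v, b), (b, v)}")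
    case True
    then obtain v a b e1 e2 where e: "e1 \<in> E" "e2 \<in> E" "e1 \<noteq> e2" "p e1 \<in> {(v, a), (a, v)}" "p e2 \<in> {(v, b), (b, v)}"
      by blast
    \<comment> \<open>Split off the two edges at v into one edge ab; an orientation of ab lifts to the path a, v, b.\<close>
    have "card (E - {e2}) < card E" using less.prems e(2) by (rule card_Diff1_less)
    then obtain q' where q': "\<forall>e\<in>E - {e2}. q' e = (p(e1 := (a, b))) e \<or> q' e = prod.swap ((p(e1 := (a, b))) e)"
      and bal: "\<forall>u. \<bar>\<Sum>e\<in>E - {e2}. net_out u (q' e)\<bar> \<le> 1"
      using less.hyps[of "E - {e2}" "p(e1 := (a, b))"] less.prems by blast
    have "e1 \<in> E - {e2}" using e by blast
    then have q'e1: "q' e1 \<in> {(a, b), (b, a)}" using q'[rule_format, of e1] by auto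
    define q where "q = q'(e1 := if q' e1 = (a, b) then (a, v) else (v, a),
                           e2 := if q' e1 = (a, b) then (v, b) else (b, v))"
    have lift: "net_out u (q e1) + net_out u (q e2) = net_out u (q' e1)" for u
      using q'e1 e(3) net_out_path[of u a v b] net_out_path[of u b v a] by (auto simp: q_def)
    have sums: "(\<Sum>e\<in>E. net_out u (q e)) = (\<Sum>e\<in>E - {e2}. net_out u (q' e))" for u
    proof -
      have fin: "finite (E - {e2})" and e1: "e1 \<in> E - {e2}" using less.prems e by auto
      have "(\<Sum>e\<in>E. net_out u (q e)) = net_out u (q e2) + (net_out u (q e1) + (\<Sum>e\<in>E - {e2} - {e1}. net_out u (q e)))"
        by (simp only: sum.remove[OF less.prems e(2)] sum.remove[OF fin e1])
      also have "(\<Sum>e\<in>E - {e2} - {e1}. net_out u (q e)) = (\<Sum>e\<in>E - {e2} - {e1}. net_out u (q' e))"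
        by (rule sum.cong) (auto simp: q_def)
      also have "net_out u (q e2) + (net_out u (q e1) + \<dots>) = (\<Sum>e\<in>E - {e2}. net_out u (q' e))"
        using lift[of u] by (simp add: sum.remove[OF fin e1])
      finally show ?thesis .
    qed
    have valid: "q e = p e \<or> q e = prod.swap (p e)" if eE: "e \<in> E" for e
    proof -
      have swap: "x = y \<or> x = prod.swap y" if "x \<in> {(z, v), (v, z)}" "y \<in> {(z, v), (v, z)}" for x y z
        using that by auto
      consider "e = e1" | "e = e2" | "e \<in> E - {e2}" "e \<noteq> e1" using eE by blast
      then show ?thesis
      proof cases
        case 1
        have "q e1 \<in> {(a, v), (v, a)}" using e(3) by (simp add: q_def)
        with 1 e(4) swap show ?thesis by blast
      next
        case 2
        have "q e2 \<in> {(b, v), (v, b)}" by (simp add: q_def)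
        with 2 e(5) swap show ?thesis by blast
      next
        case 3
        then have "q e = q' e" "(p(e1 := (a, b))) e = p e" by (simp_all add: q_def)
        with 3 q'[rule_format, of e] show ?thesis by simp
      qed
    qed
    show ?thesis
    proof (intro exI[of _ q] conjI)
      show "\<forall>e\<in>E. q e = p e \<or> q e = prod.swap (p e)" using valid by blast
      show "\<forall>u. \<bar>\<Sum>e\<in>E. net_out u (q e)\<bar> \<le> 1" using sums bal by simp
    qed
  next
    case False
    have "\<bar>\<Sum>e\<in>E. net_out u (p e)\<bar> \<le> 1" for u
    proof -
      define S where "S = {e\<in>E. fst (p e) = u \<or> snd (p e) = u}"
      have "(\<Sum>e\<in>E. net_out u (p e)) = (\<Sum>e\<in>S. net_out u (p e))"
        by (rule sum.mono_neutral_right) (auto simp: S_def net_out_def less.prems)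
      moreover have "e1 = e2" if e1: "e1 \<in> S" and e2: "e2 \<in> S" for e1 e2
      proof -
        obtain a where "p e1 \<in> {(u, a), (a, u)}" by (cases "p e1") (use e1 in \<open>auto simp: S_def\<close>)
        moreover obtain b where "p e2 \<in> {(u, b), (b, u)}" by (cases "p e2") (use e2 in \<open>auto simp: S_def\<close>)
        ultimately show ?thesis using False e1 e2 unfolding S_def by blast
      qed
      then have "S = {} \<or> (\<exists>e. S = {e})" by blast
      ultimately show ?thesis by (auto simp: net_out_def)
    qed
    then show ?thesis by (intro exI[of _ p]) simp
  qed
qed

lemma exists_balanced_bicolouring:
  fixes E :: "'e set" and ends :: "'e \<Rightarrow> 'a set"
  assumes fin: "finite E" and AB: "A \<inter> B = {}" and bip: "\<forall>e\<in>E. \<exists>a\<in>A. \<exists>b\<in>B. ends e = {a, b}"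
  shows "\<exists>\<beta>. \<forall>u. \<bar>int (card {e\<in>E. u \<in> ends e \<and> \<beta> e}) - int (card {e\<in>E. u \<in> ends e \<and> \<not> \<beta> e})\<bar> \<le> 1"
proof -
  have "\<forall>e\<in>E. \<exists>ab. ends e = {fst ab, snd ab} \<and> fst ab \<in> A \<and> snd ab \<in> B"
    using bip by fastforce
  then obtain p where p: "\<forall>e\<in>E. ends e = {fst (p e), snd (p e)} \<and> fst (p e) \<in> A \<and> snd (p e) \<in> B"
    by (metis bchoice)
  obtain q where q: "\<forall>e\<in>E. q e = p e \<or> q e = prod.swap (p e)" and bal: "\<forall>u. \<bar>\<Sum>e\<in>E. net_out u (q e)\<bar> \<le> 1"
    using exists_balanced_orientation[OF fin] by blast
  define \<beta> where "\<beta> e \<longleftrightarrow> q e = p e" for e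
  define sgn :: "'a \<Rightarrow> int" where "sgn u = (if u \<in> A then 1 else -1)" for u
  \<comment> \<open>Edges coloured \<open>\<beta>\<close> are oriented from A to B, the others from B to A.\<close>
  have edge: "net_out u (q e) = sgn u * (of_bool (u \<in> ends e \<and> \<beta> e) - of_bool (u \<in> ends e \<and> \<not> \<beta> e))"
    if "e \<in> E" for e u
  proof -
    obtain x y where pe: "p e = (x, y)" by fastforce
    have xy: "ends e = {x, y}" "x \<in> A" "y \<in> B"
      using p[rule_format, OF that] unfolding pe by simp_all
    then have "y \<notin> A" "x \<noteq> y" using AB by auto
    moreover have "q e = (x, y) \<or> q e = (y, x)" using q[rule_format, OF that] unfolding pe by simp
    ultimately have "q e = (x, y) \<and> \<beta> e \<or> q e = (y, x) \<and> \<not> \<beta> e"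
      unfolding \<beta>_def pe by auto
    then show ?thesis
    proof
      assume "q e = (x, y) \<and> \<beta> e"
      with xy \<open>y \<notin> A\<close> show ?thesis unfolding sgn_def net_out_def by auto
    next
      assume "q e = (y, x) \<and> \<not> \<beta> e"
      with xy \<open>y \<notin> A\<close> show ?thesis unfolding sgn_def net_out_def by auto
    qed
  qed
  show ?thesis
  proof (intro exI allI)
    fix u
    have "(\<Sum>e\<in>E. net_out u (q e)) =
        sgn u * (int (card {e\<in>E. u \<in> ends e \<and> \<beta> e}) - int (card {e\<in>E. u \<in> ends e \<and> \<not> \<beta> e}))"
      using fin by (simp add: edge sum_subtractf sum_distrib_left[symmetric] sum.inter_filter[symmetric] Int_def)
    then show "\<bar>int (card {e\<in>E. u \<in> ends e \<and> \<beta> e}) - int (card {e\<in>E. u \<in> ends e \<and> \<not> \<beta> e})\<bar> \<le> 1"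
      using bal[rule_format, of u] by (cases "u \<in> A") (simp_all add: sgn_def)
  qed
qed

lemma int_mult_pred_nonneg: "0 \<le> (t::int) * (t - 1)"
  by (cases "t \<le> 0") (auto intro: mult_nonneg_nonneg mult_nonpos_nonpos)

lemma sum_squares_shift:
  fixes x y a b :: nat
  assumes "x + y = a + b"
  shows "int (a\<^sup>2 + b\<^sup>2) = int (x\<^sup>2 + y\<^sup>2) + 2 * ((int a - int x) * (int a - int y))"
proof -
  define t where "t = int a - int x"
  have a: "int a = int x + t" and b: "int b = int y - t" using assms unfolding t_def by linarith+
  have "int (a\<^sup>2 + b\<^sup>2) = (int x + t)\<^sup>2 + (int y - t)\<^sup>2" by (simp add: a[symmetric] b[symmetric])
  also have "\<dots> = int (x\<^sup>2 + y\<^sup>2) + 2 * (t * (int x + t - int y))" by (simp add: power2_eq_square algebra_simps)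
  finally show ?thesis unfolding t_def by simp
qed

lemma sum_squares_le_if_balanced:
  fixes x y a b :: nat
  assumes "x + y = a + b" "x \<le> y + 1" "y \<le> x + 1"
  shows "x\<^sup>2 + y\<^sup>2 \<le> a\<^sup>2 + b\<^sup>2"
proof -
  define t where "t = int a - int x"
  have "0 \<le> t * (t - 1)" "0 \<le> t * t" "0 \<le> t * (t + 1)"
    using int_mult_pred_nonneg[of t] int_mult_pred_nonneg[of "-t"] by (simp_all add: algebra_simps)
  moreover have "int a - int y \<in> {t - 1, t, t + 1}" using assms(2,3) unfolding t_def by auto
  ultimately have "0 \<le> (int a - int x) * (int a - int y)" unfolding t_def[symmetric] by (metis empty_iff insert_iff)
  with sum_squares_shift[OF assms(1)] show ?thesis by linarith
qed

lemma sum_squares_less_if_balanced: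
  fixes x y a b :: nat
  assumes "x + y = a + b" "x \<le> y + 1" "y \<le> x + 1" "b + 1 < a"
  shows "x\<^sup>2 + y\<^sup>2 < a\<^sup>2 + b\<^sup>2"
proof -
  have "1 \<le> int a - int x" "1 \<le> int a - int y" using assms by linarith+
  then have "0 < (int a - int x) * (int a - int y)" by simp
  with sum_squares_shift[OF assms(1)] show ?thesis by linarith
qed

lemma dcol_recolour_other:
  assumes "\<forall>e\<in>E. \<phi> e \<notin> I \<longrightarrow> \<psi> e = \<phi> e" "\<forall>e\<in>E. \<phi> e \<in> I \<longrightarrow> \<psi> e \<in> I" "k \<notin> I"
  shows "dcol E ends \<psi> k u = dcol E ends \<phi> k u"
proof -
  have "\<psi> e = k \<longleftrightarrow> \<phi> e = k" if "e \<in> E" for e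
    using assms that by (cases "\<phi> e \<in> I") auto
  then show ?thesis unfolding dcol_def by (metis (mono_tags, lifting) Collect_cong)
qed

lemma exists_rebalancing_recolouring:
  fixes E :: "'e set" and ends :: "'e \<Rightarrow> 'a set"
  assumes fin: "finite E" and AB: "A \<inter> B = {}" and bip: "\<forall>e\<in>E. \<exists>a\<in>A. \<exists>b\<in>B. ends e = {a, b}"
    and ij: "i \<noteq> j"
  obtains \<psi> where "\<forall>e\<in>E. \<phi> e \<notin> {i, j} \<longrightarrow> \<psi> e = \<phi> e" "\<forall>e\<in>E. \<phi> e \<in> {i, j} \<longrightarrow> \<psi> e \<in> {i, j}"
    "\<And>u. (dcol E ends \<psi> i u)\<^sup>2 + (dcol E ends \<psi> j u)\<^sup>2 \<le> (dcol E ends \<phi> i u)\<^sup>2 + (dcol E ends \<phi> j u)\<^sup>2"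
    "\<And>u. dcol E ends \<phi> j u + 1 < dcol E ends \<phi> i u \<Longrightarrow>
       (dcol E ends \<psi> i u)\<^sup>2 + (dcol E ends \<psi> j u)\<^sup>2 < (dcol E ends \<phi> i u)\<^sup>2 + (dcol E ends \<phi> j u)\<^sup>2"
proof -
  define F where "F = {e\<in>E. \<phi> e \<in> {i, j}}"
  obtain \<beta> where \<beta>: "\<forall>u. \<bar>int (card {e\<in>F. u \<in> ends e \<and> \<beta> e}) - int (card {e\<in>F. u \<in> ends e \<and> \<not> \<beta> e})\<bar> \<le> 1"
    using exists_balanced_bicolouring[of F A B ends] fin AB bip unfolding F_def by auto
  define \<psi> where "\<psi> e = (if e \<in> F then (if \<beta> e then i else j) else \<phi> e)" for e
  have \<psi>_i: "dcol E ends \<psi> i u = card {e\<in>F. u \<in> ends e \<and> \<beta> e}" for u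
    unfolding dcol_def by (rule arg_cong[where f = card]) (use ij in \<open>auto simp: \<psi>_def F_def\<close>)
  have \<psi>_j: "dcol E ends \<psi> j u = card {e\<in>F. u \<in> ends e \<and> \<not> \<beta> e}" for u
    unfolding dcol_def by (rule arg_cong[where f = card]) (use ij in \<open>auto simp: \<psi>_def F_def\<close>)
  have same_total: "dcol E ends \<psi> i u + dcol E ends \<psi> j u = dcol E ends \<phi> i u + dcol E ends \<phi> j u" for u
  proof -
    have "{e\<in>F. u \<in> ends e} = {e\<in>F. u \<in> ends e \<and> \<beta> e} \<union> {e\<in>F. u \<in> ends e \<and> \<not> \<beta> e}"
      by blast
    then have "card {e\<in>F. u \<in> ends e} = dcol E ends \<psi> i u + dcol E ends \<psi> j u"
      unfolding \<psi>_i \<psi>_j using fin by (simp add: card_Un_disjoint F_def disjoint_iff)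
    moreover have "{e\<in>F. u \<in> ends e} = {e\<in>E. u \<in> ends e \<and> \<phi> e = i} \<union> {e\<in>E. u \<in> ends e \<and> \<phi> e = j}"
      unfolding F_def by blast
    then have "card {e\<in>F. u \<in> ends e} = dcol E ends \<phi> i u + dcol E ends \<phi> j u"
      unfolding dcol_def using fin ij by (simp add: card_Un_disjoint disjoint_iff)
    ultimately show ?thesis by simp
  qed
  have balanced: "dcol E ends \<psi> i u \<le> dcol E ends \<psi> j u + 1" "dcol E ends \<psi> j u \<le> dcol E ends \<psi> i u + 1" for u
    using \<beta>[rule_format, of u] unfolding \<psi>_i \<psi>_j by linarith+
  show ?thesis
  proof (rule that)
    show "\<forall>e\<in>E. \<phi> e \<notin> {i, j} \<longrightarrow> \<psi> e = \<phi> e" "\<forall>e\<in>E. \<phi> e \<in> {i, j} \<longrightarrow> \<psi> e \<in> {i, j}"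
      by (auto simp: \<psi>_def F_def)
    show "(dcol E ends \<psi> i u)\<^sup>2 + (dcol E ends \<psi> j u)\<^sup>2 \<le> (dcol E ends \<phi> i u)\<^sup>2 + (dcol E ends \<phi> j u)\<^sup>2" for u
      using sum_squares_le_if_balanced[OF same_total balanced] .
    show "(dcol E ends \<psi> i u)\<^sup>2 + (dcol E ends \<psi> j u)\<^sup>2 < (dcol E ends \<phi> i u)\<^sup>2 + (dcol E ends \<phi> j u)\<^sup>2"
      if "dcol E ends \<phi> j u + 1 < dcol E ends \<phi> i u" for u
      using sum_squares_less_if_balanced[OF same_total balanced that] .
  qed
qed

lemma exists_equitable_colouring:
  fixes E :: "'e set" and ends :: "'e \<Rightarrow> 'a set" and C :: "nat set"
  assumes fin: "finite E" "finite C" and C: "C \<noteq> {}"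
    and AB: "A \<inter> B = {}" and bip: "\<forall>e\<in>E. \<exists>a\<in>A. \<exists>b\<in>B. ends e = {a, b}"
  shows "\<exists>\<phi>. (\<forall>e\<in>E. \<phi> e \<in> C) \<and>
           (\<forall>u. \<forall>i\<in>C. \<forall>j\<in>C. dcol E ends \<phi> i u \<le> dcol E ends \<phi> j u + 1)"
proof -
  define U where "U = \<Union> (ends ` E)"
  have finU: "finite U" using fin bip unfolding U_def by fastforce
  define S where "S \<phi> = (\<Sum>u\<in>U. \<Sum>k\<in>C. (dcol E ends \<phi> k u)\<^sup>2)" for \<phi>
  obtain c where "c \<in> C" using C by blast
  then obtain \<phi> where \<phi>: "\<forall>e\<in>E. \<phi> e \<in> C" and min: "\<forall>\<psi>. (\<forall>e\<in>E. \<psi> e \<in> C) \<longrightarrow> S \<phi> \<le> S \<psi>"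
    using ex_has_least_nat[of "\<lambda>\<phi>. \<forall>e\<in>E. \<phi> e \<in> C" "\<lambda>_. c" S] by blast
  have "dcol E ends \<phi> i v \<le> dcol E ends \<phi> j v + 1" if ij: "i \<in> C" "j \<in> C" for i j v
  proof (rule ccontr)
    assume "\<not> ?thesis"
    then have unbalanced: "dcol E ends \<phi> j v + 1 < dcol E ends \<phi> i v" by simp
    then have "i \<noteq> j" by auto
    obtain \<psi> where keep: "\<forall>e\<in>E. \<phi> e \<notin> {i, j} \<longrightarrow> \<psi> e = \<phi> e"
      and swap: "\<forall>e\<in>E. \<phi> e \<in> {i, j} \<longrightarrow> \<psi> e \<in> {i, j}"
      and le: "\<And>u. (dcol E ends \<psi> i u)\<^sup>2 + (dcol E ends \<psi> j u)\<^sup>2 \<le> (dcol E ends \<phi> i u)\<^sup>2 + (dcol E ends \<phi> j u)\<^sup>2"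
      and less: "\<And>u. dcol E ends \<phi> j u + 1 < dcol E ends \<phi> i u \<Longrightarrow>
        (dcol E ends \<psi> i u)\<^sup>2 + (dcol E ends \<psi> j u)\<^sup>2 < (dcol E ends \<phi> i u)\<^sup>2 + (dcol E ends \<phi> j u)\<^sup>2"
      using exists_rebalancing_recolouring[OF fin(1) AB bip \<open>i \<noteq> j\<close>, where \<phi> = \<phi>] by blast
    have \<psi>: "\<forall>e\<in>E. \<psi> e \<in> C" using \<phi> keep swap ij by auto
    have split: "(\<Sum>k\<in>C. (dcol E ends \<chi> k u)\<^sup>2) =
        (\<Sum>k\<in>C - {i, j}. (dcol E ends \<chi> k u)\<^sup>2) + ((dcol E ends \<chi> i u)\<^sup>2 + (dcol E ends \<chi> j u)\<^sup>2)"
      for \<chi> u using sum.subset_diff[of "{i, j}" C] fin(2) ij \<open>i \<noteq> j\<close> by simp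
    have other: "(\<Sum>k\<in>C - {i, j}. (dcol E ends \<psi> k u)\<^sup>2) = (\<Sum>k\<in>C - {i, j}. (dcol E ends \<phi> k u)\<^sup>2)" for u
      by (intro sum.cong refl) (simp add: dcol_recolour_other[OF keep swap])
    have "{e\<in>E. v \<in> ends e \<and> \<phi> e = i} \<noteq> {}" using unbalanced unfolding dcol_def by (metis card.empty less_nat_zero_code)
    then have "v \<in> U" unfolding U_def by blast
    have "S \<psi> < S \<phi>"
      unfolding S_def split other using le less[OF unbalanced]
      by (intro sum_strict_mono_ex1[OF finU] ballI bexI[OF _ \<open>v \<in> U\<close>]) simp_all
    with min \<psi> show False by (meson leD)
  qed
  then show ?thesis using \<phi> by (intro exI[of _ \<phi>]) simp
qed

lemma sum_dcol_eq_deg: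
  assumes "finite E" "finite C" "\<forall>e\<in>E. \<phi> e \<in> C"
  shows "(\<Sum>j\<in>C. dcol E ends \<phi> j v) = deg E ends v"
proof -
  have "{e\<in>E. v \<in> ends e} = (\<Union>j\<in>C. {e\<in>E. v \<in> ends e \<and> \<phi> e = j})" using assms(3) by auto
  then have "deg E ends v = card (\<Union>j\<in>C. {e\<in>E. v \<in> ends e \<and> \<phi> e = j})" unfolding deg_def by simp
  also have "\<dots> = (\<Sum>j\<in>C. dcol E ends \<phi> j v)"
    unfolding dcol_def by (rule card_UN_disjoint) (use assms(1,2) in auto)
  finally show ?thesis by simp
qed

lemma eq_average_if_nearly_constant:
  fixes g :: "'a \<Rightarrow> nat"
  assumes "finite C" and near: "\<forall>i\<in>C. \<forall>j\<in>C. g i \<le> g j + 1"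
    and sum: "(\<Sum>j\<in>C. g j) = card C * q" and i: "i \<in> C"
  shows "g i = q"
proof (rule ccontr)
  assume "g i \<noteq> q"
  then consider "q < g i" | "g i < q" by linarith
  then show False
  proof cases
    case 1
    with near i have "\<forall>j\<in>C. q \<le> g j" by fastforce
    with 1 i \<open>finite C\<close> have "(\<Sum>j\<in>C. q) < (\<Sum>j\<in>C. g j)" by (intro sum_strict_mono_ex1) auto
    with sum show False by simp
  next
    case 2
    with near i have "\<forall>j\<in>C. g j \<le> q" by fastforce
    with 2 i \<open>finite C\<close> have "(\<Sum>j\<in>C. g j) < (\<Sum>j\<in>C. q)" by (intro sum_strict_mono_ex1) auto
    with sum show False by simp
  qed
qed

lemma exists_exact_colouring:
  fixes E :: "'e set" and ends :: "'e \<Rightarrow> 'a set" and C :: "nat set"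
  assumes fin: "finite E" "finite C" and C: "C \<noteq> {}"
    and AB: "A \<inter> B = {}" and bip: "\<forall>e\<in>E. \<exists>a\<in>A. \<exists>b\<in>B. ends e = {a, b}"
    and dvd: "\<forall>v. card C dvd deg E ends v"
  shows "\<exists>\<phi>. (\<forall>e\<in>E. \<phi> e \<in> C) \<and> (\<forall>v. \<forall>j\<in>C. card C * dcol E ends \<phi> j v = deg E ends v)"
proof -
  obtain \<phi> where \<phi>: "\<forall>e\<in>E. \<phi> e \<in> C"
    and near: "\<forall>v. \<forall>i\<in>C. \<forall>j\<in>C. dcol E ends \<phi> i v \<le> dcol E ends \<phi> j v + 1"
    using exists_equitable_colouring[OF fin C AB bip] by blast
  have "card C * dcol E ends \<phi> j v = deg E ends v" if "j \<in> C" for j v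
  proof -
    obtain q where q: "deg E ends v = card C * q" using dvd by blast
    have "dcol E ends \<phi> j v = q"
      using eq_average_if_nearly_constant[OF fin(2) spec[OF near, of v] _ that]
        sum_dcol_eq_deg[OF fin \<phi>, of ends v] q by simp
    with q show ?thesis by simp
  qed
  with \<phi> show ?thesis by blast
qed

section \<open>Colouring along the decomposition\<close>

lemma deg_ge_if_edge_connected:
  assumes ec: "edge_connected k V E ends" and v: "v \<in> V"
  shows "k \<le> deg E ends v"
proof (rule ccontr)
  assume "\<not> k \<le> deg E ends v"
  then have "card {e\<in>E. v \<in> ends e} < k" unfolding deg_def by simp
  then have "mg_connected V (E - {e\<in>E. v \<in> ends e}) ends" and "card V > 1"
    using ec unfolding edge_connected_def by auto
  moreover obtain u where "u \<in> V" "u \<noteq> v"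
  proof -
    have "finite V" using \<open>card V > 1\<close> by (metis card.infinite not_less_zero)
    then have "\<not> (\<forall>a\<in>V. \<forall>b\<in>V. a = b)" using \<open>card V > 1\<close> card_le_Suc0_iff_eq by fastforce
    then show ?thesis using that v by blast
  qed
  ultimately have "(\<lambda>x y. \<exists>e\<in>E - {e\<in>E. v \<in> ends e}. ends e = {x, y})\<^sup>*\<^sup>* v u"
    using v unfolding mg_connected_def by blast
  then show False
    by (cases rule: converse_rtranclpE) (use \<open>u \<noteq> v\<close> in auto)
qed

lemma exists_divisible_decomposition:
  fixes V :: "'a set" and E :: "'e set" and k :: nat and ms :: "nat \<Rightarrow> nat"
  assumes f: "decomp_property f" and bip: "bipartite_on V E ends A B"
    and divA: "\<forall>v\<in>A. m dvd deg E ends v" and conn: "edge_connected (f m (m * d)) V E ends"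
    and k: "1 \<le> k" and ms: "\<forall>i\<in>{1..k}. 0 < ms i" "m = (\<Sum>i=1..k. ms i)" "ms k = 1"
  obtains \<psi> where "\<forall>e\<in>E. \<psi> e \<in> {1..k}"
    "\<forall>i\<in>{1..k}. \<forall>v\<in>A. m * deg {e\<in>E. \<psi> e = i} ends v = ms i * deg E ends v"
    "\<forall>i\<in>{1..k}. \<forall>v. ms i dvd deg {e\<in>E. \<psi> e = i} ends v"
    "\<forall>i\<in>{1..k}. \<forall>v\<in>V. m * d \<le> deg {e\<in>E. \<psi> e = i} ends v"
proof -
  obtain \<psi> where \<psi>: "\<forall>e\<in>E. \<psi> e \<in> {1..k}"
    and parts: "\<forall>i\<in>{1..k}. edge_connected (m * d) V {e\<in>E. \<psi> e = i} ends \<and>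
       (\<forall>v\<in>A. m * deg {e\<in>E. \<psi> e = i} ends v = ms i * deg E ends v) \<and>
       (i < k \<longrightarrow> (\<forall>v\<in>B. ms i dvd deg {e\<in>E. \<psi> e = i} ends v))"
    using decomp_propertyD[OF f k ms(1,2) bip divA conn] by blast
  have AB: "A \<union> B = V" and ends: "\<forall>e\<in>E. ends e \<subseteq> V"
    using bip unfolding bipartite_on_def multigraph_def by auto
  have "ms k \<le> m" unfolding ms(2) using k by (intro member_le_sum) auto
  with ms(3) have "0 < m" by simp
  have "ms i dvd deg {e\<in>E. \<psi> e = i} ends v" if i: "i \<in> {1..k}" for i v
  proof -
    consider "v \<in> A" | "v \<in> B" "i < k" | "i = k" | "v \<notin> V" using i AB by fastforce
    then show ?thesis
    proof cases
      case 1
      then obtain q where "deg E ends v = m * q" using divA by blast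
      with 1 parts i have "m * deg {e\<in>E. \<psi> e = i} ends v = m * (ms i * q)"
        by (simp add: mult.left_commute)
      with \<open>0 < m\<close> have "deg {e\<in>E. \<psi> e = i} ends v = ms i * q" by simp
      then show ?thesis by simp
    next
      case 2
      with parts i show ?thesis by blast
    next
      case 3
      with ms(3) show ?thesis by simp
    next
      case 4
      with ends have "{e\<in>{e\<in>E. \<psi> e = i}. v \<in> ends e} = {}" by blast
      then have "deg {e\<in>E. \<psi> e = i} ends v = 0" unfolding deg_def by (metis card.empty)
      then show ?thesis by simp
    qed
  qed
  moreover have "m * d \<le> deg {e\<in>E. \<psi> e = i} ends v" if "i \<in> {1..k}" "v \<in> V" for i v
    using deg_ge_if_edge_connected[of "m * d" V "{e\<in>E. \<psi> e = i}" ends v] parts that by blast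
  ultimately show ?thesis using parts by (intro that[OF \<psi>]) auto
qed

lemma dcol_piecewise_colouring:
  assumes "\<forall>e\<in>E. \<psi> e \<in> I" "\<forall>e\<in>E. \<Phi> (\<psi> e) e \<in> C (\<psi> e)"
    and "\<forall>i\<in>I. \<forall>i'\<in>I. i \<noteq> i' \<longrightarrow> C i \<inter> C i' = {}" and "i \<in> I" "j \<in> C i"
  shows "dcol E ends (\<lambda>e. \<Phi> (\<psi> e) e) j v = dcol {e\<in>E. \<psi> e = i} ends (\<Phi> i) j v"
proof -
  have "\<psi> e = i" if "e \<in> E" "\<Phi> (\<psi> e) e = j" for e
    using assms(2,4,5) assms(3)[rule_format, of "\<psi> e" i] assms(1) that by blast
  then have "{e\<in>E. v \<in> ends e \<and> \<Phi> (\<psi> e) e = j} = {e\<in>{e\<in>E. \<psi> e = i}. v \<in> ends e \<and> \<Phi> i e = j}"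
    by auto
  then show ?thesis unfolding dcol_def by simp
qed

lemma block_equitable_colouring:
  fixes V :: "'a set" and E :: "'e set" and C :: "nat \<Rightarrow> nat set" and k :: nat
  assumes f: "decomp_property f" and bip: "bipartite_on V E ends A B"
    and divA: "\<forall>v\<in>A. m dvd deg E ends v" and conn: "edge_connected (f m (m * d)) V E ends"
    and k: "1 \<le> k" and C: "\<forall>i\<in>{1..k}. finite (C i) \<and> C i \<noteq> {}"
    and disj: "\<forall>i\<in>{1..k}. \<forall>i'\<in>{1..k}. i \<noteq> i' \<longrightarrow> C i \<inter> C i' = {}"
    and last: "card (C k) = 1" and m: "m = (\<Sum>i=1..k. card (C i))"
  obtains \<phi> where "\<forall>e\<in>E. \<exists>i\<in>{1..k}. \<phi> e \<in> C i"
    "\<forall>i\<in>{1..k}. \<forall>j\<in>C i. \<forall>v\<in>A. m * dcol E ends \<phi> j v = deg E ends v"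
    "\<forall>i\<in>{1..k}. \<forall>j\<in>C i. \<forall>j'\<in>C i. \<forall>v\<in>B. dcol E ends \<phi> j v = dcol E ends \<phi> j' v"
    "\<forall>i\<in>{1..k}. \<forall>j\<in>C i. \<forall>v\<in>V. d \<le> dcol E ends \<phi> j v"
proof -
  have card_pos: "0 < card (C i)" if "i \<in> {1..k}" for i
    using C that by (simp add: card_gt_0_iff)
  obtain \<psi> where \<psi>: "\<forall>e\<in>E. \<psi> e \<in> {1..k}"
    and propA: "\<forall>i\<in>{1..k}. \<forall>v\<in>A. m * deg {e\<in>E. \<psi> e = i} ends v = card (C i) * deg E ends v"
    and dvd: "\<forall>i\<in>{1..k}. \<forall>v. card (C i) dvd deg {e\<in>E. \<psi> e = i} ends v"
    and large: "\<forall>i\<in>{1..k}. \<forall>v\<in>V. m * d \<le> deg {e\<in>E. \<psi> e = i} ends v"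
    by (rule exists_divisible_decomposition[OF f bip divA conn k _ m last]) (use card_pos in blast)
  have finE: "finite E" and AB: "A \<inter> B = {}" and edges: "\<forall>e\<in>E. \<exists>a\<in>A. \<exists>b\<in>B. ends e = {a, b}"
    using bip unfolding bipartite_on_def multigraph_def by auto
  have "\<forall>i\<in>{1..k}. \<exists>\<Phi>. (\<forall>e\<in>{e\<in>E. \<psi> e = i}. \<Phi> e \<in> C i) \<and>
      (\<forall>v. \<forall>j\<in>C i. card (C i) * dcol {e\<in>E. \<psi> e = i} ends \<Phi> j v = deg {e\<in>E. \<psi> e = i} ends v)"
  proof
    fix i assume "i \<in> {1..k}"
    then show "\<exists>\<Phi>. (\<forall>e\<in>{e\<in>E. \<psi> e = i}. \<Phi> e \<in> C i) \<and>
      (\<forall>v. \<forall>j\<in>C i. card (C i) * dcol {e\<in>E. \<psi> e = i} ends \<Phi> j v = deg {e\<in>E. \<psi> e = i} ends v)"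
      using finE C edges dvd by (intro exists_exact_colouring[OF _ _ _ AB]) auto
  qed
  from bchoice[OF this] obtain \<Phi> where "\<forall>i\<in>{1..k}. (\<forall>e\<in>{e\<in>E. \<psi> e = i}. \<Phi> i e \<in> C i) \<and>
      (\<forall>v. \<forall>j\<in>C i. card (C i) * dcol {e\<in>E. \<psi> e = i} ends (\<Phi> i) j v = deg {e\<in>E. \<psi> e = i} ends v)"
    by blast
  then have \<Phi>: "\<forall>i\<in>{1..k}. \<forall>e\<in>{e\<in>E. \<psi> e = i}. \<Phi> i e \<in> C i"
    and exact: "\<forall>i\<in>{1..k}. \<forall>v. \<forall>j\<in>C i.
      card (C i) * dcol {e\<in>E. \<psi> e = i} ends (\<Phi> i) j v = deg {e\<in>E. \<psi> e = i} ends v"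
    by blast+
  define \<phi> where "\<phi> = (\<lambda>e. \<Phi> (\<psi> e) e)"
  have range: "\<forall>e\<in>E. \<phi> e \<in> C (\<psi> e)" using \<psi> \<Phi> unfolding \<phi>_def by blast
  have glued: "card (C i) * dcol E ends \<phi> j v = deg {e\<in>E. \<psi> e = i} ends v"
    if i: "i \<in> {1..k}" and j: "j \<in> C i" for i j v
  proof -
    have "card (C i) * dcol {e\<in>E. \<psi> e = i} ends (\<Phi> i) j v = deg {e\<in>E. \<psi> e = i} ends v"
      using exact i j by blast
    then show ?thesis
      unfolding \<phi>_def dcol_piecewise_colouring[where \<Phi> = \<Phi> and \<psi> = \<psi> and C = C, OF \<psi> range[unfolded \<phi>_def] disj i j] .
  qed
  show ?thesis
  proof (rule that)
    show "\<forall>e\<in>E. \<exists>i\<in>{1..k}. \<phi> e \<in> C i" using \<psi> range by blast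
    show "\<forall>i\<in>{1..k}. \<forall>j\<in>C i. \<forall>v\<in>A. m * dcol E ends \<phi> j v = deg E ends v"
    proof (intro ballI)
      fix i j v assume i: "i \<in> {1..k}" and j: "j \<in> C i" and v: "v \<in> A"
      have "card (C i) * (m * dcol E ends \<phi> j v) = m * deg {e\<in>E. \<psi> e = i} ends v"
        using glued[OF i j] by (simp add: mult.left_commute)
      also have "\<dots> = card (C i) * deg E ends v" using propA i v by blast
      finally show "m * dcol E ends \<phi> j v = deg E ends v" using card_pos[OF i] by simp
    qed
    show "\<forall>i\<in>{1..k}. \<forall>j\<in>C i. \<forall>j'\<in>C i. \<forall>v\<in>B. dcol E ends \<phi> j v = dcol E ends \<phi> j' v"
    proof (intro ballI)
      fix i j j' v assume i: "i \<in> {1..k}" and j: "j \<in> C i" "j' \<in> C i"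
      have "card (C i) * dcol E ends \<phi> j v = card (C i) * dcol E ends \<phi> j' v"
        using glued[OF i j(1)] glued[OF i j(2)] by simp
      then show "dcol E ends \<phi> j v = dcol E ends \<phi> j' v" using card_pos[OF i] by simp
    qed
    show "\<forall>i\<in>{1..k}. \<forall>j\<in>C i. \<forall>v\<in>V. d \<le> dcol E ends \<phi> j v"
    proof (intro ballI)
      fix i j v assume i: "i \<in> {1..k}" and j: "j \<in> C i" and v: "v \<in> V"
      have "card (C i) \<le> m" unfolding m using i by (intro member_le_sum) auto
      then have "card (C i) * d \<le> m * d" by simp
      also have "\<dots> \<le> card (C i) * dcol E ends \<phi> j v" using large i v glued[OF i j, of v] by simp
      finally show "d \<le> dcol E ends \<phi> j v" using card_pos[OF i] by simp
    qed
  qed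
qed

section \<open>Colour blocks of the tree\<close>

lemma finite_edges_if_simple_graph:
  assumes "simple_graph VT ET"
  shows "finite ET"
proof -
  have "ET \<subseteq> Pow VT" and "finite VT" using assms unfolding simple_graph_def by auto
  then show ?thesis by (metis finite_Pow_iff finite_subset)
qed

lemma tdeg_pos_if_connected:
  assumes "sg_connected VT ET" "finite ET" "t \<in> VT" "w \<in> VT" "w \<noteq> t"
  shows "0 < tdeg ET t"
proof -
  have "(\<lambda>x y. {x, y} \<in> ET)\<^sup>*\<^sup>* t w" using assms(1,3,4) unfolding sg_connected_def by blast
  then obtain z where "{t, z} \<in> ET"
    by (cases rule: converse_rtranclpE) (use assms(5) in auto)
  then have "{e\<in>ET. t \<in> e} \<noteq> {}" by blast
  then show ?thesis unfolding tdeg_def using assms(2) by (simp add: card_gt_0_iff)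
qed

lemma unique_end_in_class:
  assumes "\<forall>e\<in>ET. \<exists>x\<in>TA. \<exists>y\<in>TB. e = {x, y}" "TA \<inter> TB = {}"
  shows "\<forall>e\<in>ET. \<exists>!t\<in>TB. t \<in> e"
proof
  fix e assume "e \<in> ET"
  then obtain x y where "x \<in> TA" "y \<in> TB" "e = {x, y}" using assms(1) by blast
  moreover have "x \<notin> TB" using \<open>x \<in> TA\<close> assms(2) by blast
  ultimately show "\<exists>!t\<in>TB. t \<in> e" by (intro ex1I[of _ y]) auto
qed

lemma sum_tdeg_class_eq_card:
  assumes "finite ET" "finite TB" "\<forall>e\<in>ET. \<exists>!t\<in>TB. t \<in> e"
  shows "(\<Sum>t\<in>TB. tdeg ET t) = card ET"
proof -
  have "ET = (\<Union>t\<in>TB. {e\<in>ET. t \<in> e})" using assms(3) by blast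
  moreover have "card (\<Union>t\<in>TB. {e\<in>ET. t \<in> e}) = (\<Sum>t\<in>TB. tdeg ET t)"
    unfolding tdeg_def by (rule card_UN_disjoint) (use assms in auto)
  ultimately show ?thesis by simp
qed

lemma card_tcols:
  assumes "inj_on c ET"
  shows "card (tcols ET c t) = tdeg ET t"
  unfolding tcols_def tdeg_def using assms by (simp add: card_image inj_on_subset)

lemma tcols_disjoint:
  assumes "inj_on c ET" "\<forall>e\<in>ET. \<exists>!t\<in>TB. t \<in> e" "t \<in> TB" "t' \<in> TB" "t \<noteq> t'"
  shows "tcols ET c t \<inter> tcols ET c t' = {}"
proof (rule ccontr)
  assume "tcols ET c t \<inter> tcols ET c t' \<noteq> {}"
  then obtain e e' where "e \<in> ET" "t \<in> e" "e' \<in> ET" "t' \<in> e'" "c e = c e'"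
    unfolding tcols_def by blast
  then have "e = e'" using assms(1) by (meson inj_onD)
  with assms(2-5) \<open>e \<in> ET\<close> \<open>t \<in> e\<close> \<open>t' \<in> e'\<close> show False by blast
qed

lemma UN_tcols:
  assumes "\<forall>e\<in>ET. \<exists>t\<in>TB. t \<in> e"
  shows "(\<Union>t\<in>TB. tcols ET c t) = c ` ET"
  using assms unfolding tcols_def by blast

lemma ex_enumeration_ending_at:
  assumes "finite S" "s \<in> S"
  obtains g where "bij_betw g {1..card S} S" "g (card S) = s"
proof -
  define n where "n = card S"
  have "card (S - {s}) = n - 1" using assms unfolding n_def by simp
  then obtain h where h: "bij_betw h {1..n - 1} (S - {s})"
    using ex_bij_betw_nat_finite_1[of "S - {s}"] assms(1) by auto
  have "bij_betw (\<lambda>x. if x \<in> {1..n - 1} then h x else s) ({1..n - 1} \<union> {n}) ((S - {s}) \<union> {s})"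
    by (rule bij_betw_disjoint_Un[OF h]) auto
  moreover have "0 < n" using assms card_gt_0_iff[of S] unfolding n_def by blast
  then have "{1..n - 1} \<union> {n} = {1..n}" by auto
  moreover have "(S - {s}) \<union> {s} = S" using assms(2) by blast
  ultimately have "bij_betw (\<lambda>x. if x \<in> {1..n - 1} then h x else s) {1..n} S" by simp
  moreover have "(\<lambda>x. if x \<in> {1..n - 1} then h x else s) n = s" using \<open>0 < n\<close> by auto
  ultimately show ?thesis unfolding n_def by (rule that)
qed

lemma tree_colour_blocks:
  assumes tree: "is_tree VT ET"
    and TAB: "TA \<union> TB = VT" "TA \<inter> TB = {}" "\<forall>e\<in>ET. \<exists>x\<in>TA. \<exists>y\<in>TB. e = {x, y}"
    and leaf: "t0 \<in> TB" "is_leaf ET t0" and c: "bij_betw c ET {1..m}"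
  obtains k :: nat and g where "1 \<le> k" "bij_betw g {1..k} TB"
    "\<forall>i\<in>{1..k}. finite (tcols ET c (g i)) \<and> tcols ET c (g i) \<noteq> {}"
    "\<forall>i\<in>{1..k}. \<forall>i'\<in>{1..k}. i \<noteq> i' \<longrightarrow> tcols ET c (g i) \<inter> tcols ET c (g i') = {}"
    "card (tcols ET c (g k)) = 1" "m = (\<Sum>i=1..k. card (tcols ET c (g i)))"
    "(\<Union>i\<in>{1..k}. tcols ET c (g i)) = {1..m}"
proof -
  have sg: "simple_graph VT ET" and conn: "sg_connected VT ET" using tree unfolding is_tree_def by auto
  have finET: "finite ET" using finite_edges_if_simple_graph[OF sg] .
  have finTB: "finite TB" using sg TAB(1) unfolding simple_graph_def by auto
  have uniq: "\<forall>e\<in>ET. \<exists>!t\<in>TB. t \<in> e" using unique_end_in_class[OF TAB(3,2)] .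
  have inj: "inj_on c ET" and img: "c ` ET = {1..m}" using c by (auto simp: bij_betw_def)
  obtain g where g: "bij_betw g {1..card TB} TB" "g (card TB) = t0"
    using ex_enumeration_ending_at[OF finTB leaf(1)] by blast
  have "{e\<in>ET. t0 \<in> e} \<noteq> {}" using leaf(2) unfolding is_leaf_def tdeg_def by force
  then obtain x y where xy: "{x, y} \<in> ET" "x \<noteq> y" "x \<in> VT" "y \<in> VT"
    using tree unfolding is_tree_def simple_graph_def by blast
  have tdeg_pos: "0 < tdeg ET t" if "t \<in> TB" for t
  proof -
    obtain w where "w \<in> VT" "w \<noteq> t" using xy by blast
    then show ?thesis using tdeg_pos_if_connected[OF conn finET] that TAB(1) by blast
  qed
  have g_TB: "g i \<in> TB" if "i \<in> {1..card TB}" for i using g(1) that by (auto simp: bij_betw_def)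
  show ?thesis
  proof (rule that[where g = g and k = "card TB"])
    show "bij_betw g {1..card TB} TB" by (rule g(1))
    show "1 \<le> card TB" using finTB leaf(1) by (auto simp: Suc_le_eq card_gt_0_iff)
    show "\<forall>i\<in>{1..card TB}. finite (tcols ET c (g i)) \<and> tcols ET c (g i) \<noteq> {}"
    proof (intro ballI conjI)
      fix i assume "i \<in> {1..card TB}"
      show "finite (tcols ET c (g i))" unfolding tcols_def using finET by simp
      show "tcols ET c (g i) \<noteq> {}"
        using card_tcols[OF inj, of "g i"] tdeg_pos[OF g_TB] \<open>i \<in> {1..card TB}\<close> by force
    qed
    show "\<forall>i\<in>{1..card TB}. \<forall>i'\<in>{1..card TB}. i \<noteq> i' \<longrightarrow> tcols ET c (g i) \<inter> tcols ET c (g i') = {}"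
    proof (intro ballI impI)
      fix i i' assume "i \<in> {1..card TB}" "i' \<in> {1..card TB}" "i \<noteq> i'"
      then have "g i \<noteq> g i'" using g(1) unfolding bij_betw_def by (meson inj_onD)
      then show "tcols ET c (g i) \<inter> tcols ET c (g i') = {}"
        using tcols_disjoint[OF inj uniq g_TB g_TB] \<open>i \<in> {1..card TB}\<close> \<open>i' \<in> {1..card TB}\<close> by blast
    qed
    show "card (tcols ET c (g (card TB))) = 1"
      using g(2) leaf(2) card_tcols[OF inj] unfolding is_leaf_def by simp
    have "(\<Sum>i=1..card TB. card (tcols ET c (g i))) = (\<Sum>t\<in>TB. tdeg ET t)"
      using sum.reindex_bij_betw[OF g(1), of "tdeg ET"] card_tcols[OF inj] by simp
    then show "m = (\<Sum>i=1..card TB. card (tcols ET c (g i)))"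
      using sum_tdeg_class_eq_card[OF finET finTB uniq] bij_betw_same_card[OF c] by simp
    have "\<forall>e\<in>ET. \<exists>t\<in>TB. t \<in> e" using uniq by blast
    then have "(\<Union>t\<in>TB. tcols ET c t) = {1..m}" using UN_tcols img by metis
    then show "(\<Union>i\<in>{1..card TB}. tcols ET c (g i)) = {1..m}"
      using g(1) by (simp add: bij_betw_def image_image[symmetric])
  qed
qed

lemma T_equitable_if_blockwise_equal:
  assumes colT: "bij_betw c ET {1..m}" and "0 < m" and g: "bij_betw g {1..k} TB"
    and colours: "(\<Union>i\<in>{1..k}. tcols ET c (g i)) = {1..m}"
    and range: "\<forall>e\<in>E. \<exists>i\<in>{1..k}. \<phi> e \<in> tcols ET c (g i)"
    and exactA: "\<forall>i\<in>{1..k}. \<forall>j\<in>tcols ET c (g i). \<forall>v\<in>A. m * dcol E ends \<phi> j v = deg E ends v"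
    and equalB: "\<forall>i\<in>{1..k}. \<forall>j\<in>tcols ET c (g i). \<forall>j'\<in>tcols ET c (g i). \<forall>v\<in>B.
        dcol E ends \<phi> j v = dcol E ends \<phi> j' v"
  shows "T_equitable ET TA TB c E ends A B \<phi>"
proof -
  have "card ET = m" using bij_betw_same_card[OF colT] by simp
  show ?thesis
    unfolding T_equitable_def \<open>card ET = m\<close>
  proof (intro conjI ballI impI)
    show "\<phi> e \<in> {1..m}" if "e \<in> E" for e using range that colours by blast
    show "dcol E ends \<phi> j v = dcol E ends \<phi> j' v"
      if "v \<in> A" "j \<in> tcols ET c t" "j' \<in> tcols ET c t" for v t j j'
    proof -
      have "j \<in> {1..m}" "j' \<in> {1..m}" using that colT unfolding tcols_def bij_betw_def by blast+
      then have "m * dcol E ends \<phi> j v = m * dcol E ends \<phi> j' v"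
        using exactA colours \<open>v \<in> A\<close> by (metis (no_types, lifting) UN_iff)
      with \<open>0 < m\<close> show ?thesis by simp
    qed
    show "dcol E ends \<phi> j v = dcol E ends \<phi> j' v"
      if "v \<in> B" "t \<in> TB" "j \<in> tcols ET c t" "j' \<in> tcols ET c t" for v t j j'
    proof -
      obtain i where "i \<in> {1..k}" "t = g i" using g \<open>t \<in> TB\<close> unfolding bij_betw_def by blast
      with equalB that show ?thesis by blast
    qed
  qed
qed

theorem theorem14:
  fixes VT :: "'v set" and ET :: "'v set set" and TA TB :: "'v set"
    and c :: "'v set \<Rightarrow> nat" and m :: nat
    and f :: "nat \<Rightarrow> nat \<Rightarrow> nat" and d :: nat
    and V :: "'a set" and E :: "'e set" and ends :: "'e \<Rightarrow> 'a set" and A B :: "'a set"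
  assumes tree: "is_tree VT ET"
    and m_def: "m = card ET"
    and TAB: "TA \<union> TB = VT" "TA \<inter> TB = {}" "\<forall>e\<in>ET. \<exists>x\<in>TA. \<exists>y\<in>TB. e = {x, y}"
    and leaf_TB: "\<exists>t\<in>TB. is_leaf ET t"
    and colT: "bij_betw c ET {1..m}"
    and f: "decomp_property f"
    and bip: "bipartite_on V E ends A B"
    and divA: "\<forall>v\<in>A. m dvd deg E ends v"
    and conn: "edge_connected (f m (m * d)) V E ends"
  shows "\<exists>\<phi>. T_equitable ET TA TB c E ends A B \<phi> \<and>
           (\<forall>v\<in>V. \<forall>j\<in>{1..m}. dcol E ends \<phi> j v \<ge> d)"
proof -
  obtain t0 where "t0 \<in> TB" "is_leaf ET t0" using leaf_TB by blast
  then obtain k :: nat and g where k: "1 \<le> k" and g: "bij_betw g {1..k} TB"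
    and blocks: "\<forall>i\<in>{1..k}. finite (tcols ET c (g i)) \<and> tcols ET c (g i) \<noteq> {}"
      "\<forall>i\<in>{1..k}. \<forall>i'\<in>{1..k}. i \<noteq> i' \<longrightarrow> tcols ET c (g i) \<inter> tcols ET c (g i') = {}"
      "card (tcols ET c (g k)) = 1" "m = (\<Sum>i=1..k. card (tcols ET c (g i)))"
    and colours: "(\<Union>i\<in>{1..k}. tcols ET c (g i)) = {1..m}"
    by (rule tree_colour_blocks[OF tree TAB _ _ colT])
  obtain \<phi> where "\<forall>e\<in>E. \<exists>i\<in>{1..k}. \<phi> e \<in> tcols ET c (g i)"
    "\<forall>i\<in>{1..k}. \<forall>j\<in>tcols ET c (g i). \<forall>v\<in>A. m * dcol E ends \<phi> j v = deg E ends v"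
    "\<forall>i\<in>{1..k}. \<forall>j\<in>tcols ET c (g i). \<forall>j'\<in>tcols ET c (g i). \<forall>v\<in>B.
       dcol E ends \<phi> j v = dcol E ends \<phi> j' v"
    and at_least_d: "\<forall>i\<in>{1..k}. \<forall>j\<in>tcols ET c (g i). \<forall>v\<in>V. d \<le> dcol E ends \<phi> j v"
    by (rule block_equitable_colouring[OF f bip divA conn k blocks])
  moreover have "0 < m"
    using blocks(3,4) k member_le_sum[of k "{1..k}" "\<lambda>i. card (tcols ET c (g i))"] by simp
  ultimately have "T_equitable ET TA TB c E ends A B \<phi>"
    using T_equitable_if_blockwise_equal[OF colT _ g colours] by blast
  moreover have "\<forall>v\<in>V. \<forall>j\<in>{1..m}. d \<le> dcol E ends \<phi> j v" using at_least_d colours by blast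
  ultimately show ?thesis by blast
qed

end
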